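(* For the link two-relaxation-times scheme described in the context, under acoustic scaling ($\lambda>0$ fixed as $\Delta x\to0$), the modified equation of the bulk finite difference scheme $p_2(z)m_1=0$ is, for $(t,x)\in\mathbb{R}_+\times\mathbb{R}^d$, \begin{align*} \partial_t\phi(t,x)&+\lambda\sum_{j=1}^W\epsilon_{2j}\sum_{|\mathfrak n|=1}c_{2j}^{\mathfrak n}\partial_x^{\mathfrak n}\phi(t,x)\\ &-\lambda\Delta x\Big(\frac1s-\frac12\Big)\Big(2\sum_{j=1}^W\epsilon_{2j+1}\sum_{|\mathfrak n|=2}\frac{c_{2j}^{\mathfrak n}}{\mathfrak n!}\partial_x^{\mathfrak n}-\Big(\sum_{j=1}^W\epsilon_{2j}\sum_{|\mathfrak n|=1}c_{2j}^{\mathfrak n}\partial_x^{\mathfrak n}\Big)^2\Big)\phi(t,x)=O(\Delta x^2). \end{align*} Moreover, for a local initialisation $w\in\mathbb{R}^q$ with $w_1=1$ and $w_{2j}=\epsilon_{2j}$ for $j\in\{1,\dots,W\}$, the modified equation of the unique initialisation scheme $m_1(\Delta t,x)=(Ew)_1m_1^\circ(x)$ is, for $x\in\mathbb{R}^d$, \begin{align*} \partial_t\phi(0,x)&+\lambda\sum_{j=1}^W\epsilon_{2j}\sum_{|\mathfrak n|=1}c_{2j}^{\mathfrak n}\partial_x^{\mathfrak n}\phi(0,x)\\ &-\frac{\lambda\Delta x}{2}\Big(2\sum_{j=1}^W\big((2-s)\epsilon_{2j+1}+(s-1)w_{2j+1}\big)\sum_{|\mathfrak n|=2}\frac{c_{2j}^{\mathfrak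 n}}{\mathfrak n!}\partial_x^{\mathfrak n}-\Big(\sum_{j=1}^W\epsilon_{2j}\sum_{|\mathfrak n|=1}c_{2j}^{\mathfrak n}\partial_x^{\mathfrak n}\Big)^2\Big)\phi(0,x)=O(\Delta x^2). \end{align*}
   Context: Let $d\ge1$, $W\in\mathbb{N}^*$, $q=1+2W$. Velocities $c_1=0$, $c_{2j}=-c_{2j+1}\in\mathbb{Z}^d$ for $j\in\{1,\dots,W\}$. Moment matrix $M$ with first row $(1,\dots,1)$ and, for each $j$, row $2j$ with entries $1,-1$ in columns $2j,2j+1$, row $2j+1$ with entries $1,1$ in columns $2j,2j+1$, zeros elsewhere. Relaxation parameters $s_{2j}=s\in(0,2]$, $s_{2j+1}=2-s$; equilibrium coefficients $\epsilon\in\mathbb{R}^q$, $\epsilon_1=1$, independent of $\Delta x$; $K=I-S(I-\epsilon e_1^T)$, $S=\mathrm{diag}(s_i)$. $\Delta t=\Delta x/\lambda$. Shifts $(x_\ell\phi)(x)=\phi(x-\Delta xe_\ell)$, $x^c=\prod x_\ell^{c_\ell}$; for a Laurent polynomial $\mathsf d$, $\mathsf S(\mathsf d)=(\mathsf d(x)+\mathsf d(x^{-1}))/2$, $\mathsf A(\mathsf d)=(\mathsf d(x)-\mathsf d(x^{-1}))/2$. $T=M\mathrm{diag}(x^{c_1},\dots,x^{c_q})M^{-1}$, $E=TK$. Time shift $(z\phi)(t)=\phi(t+\Delta t)$. Multi-index notation: $c^{\mathfrak n}=\prod c_\ell^{\mathfrak n_\ell}$, $\mathfrak n!=\prod\mathfrak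 n_\ell!$, $\partial_x^{\mathfrak n}=\prod\partial_{x_\ell}^{\mathfrak n_\ell}$. The bulk finite difference scheme on the conserved moment is $p_2(z)m_1=0$ with $p_2(z)=z^2+(s-2)z+(1-s)-zs\sum_{j}\mathsf A(x^{c_{2j}})\epsilon_{2j}+z(s-2)\sum_j(\mathsf S(x^{c_{2j}})-1)\epsilon_{2j+1}$. The initialisation is $m(0,x)=w\,m_1^\circ(x)$. Modified equations are obtained by substituting a smooth $\phi$ for the discrete unknowns in the scheme (for the initialisation scheme: $(z\phi)(0,x)=((Ew)_1\phi(0,\cdot))(x)$), Taylor-expanding in $\Delta x$, normalising so that $\partial_t$ has coefficient one, and eliminating higher-order time derivatives using the lower-order relations. *)

theory Defs
  imports "HOL-Analysis.Analysis" "HOL-Library.Landau_Symbols"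
begin

coinductive smooth_fun :: "('a::real_normed_vector \<Rightarrow> real) \<Rightarrow> bool" where
  "(\<forall>p. f differentiable (at p)) \<Longrightarrow>
   (\<forall>v. smooth_fun (\<lambda>p. frechet_derivative f (at p) v)) \<Longrightarrow> smooth_fun f"

definition pdt :: "(real \<times> (real^'d) \<Rightarrow> real) \<Rightarrow> real \<times> (real^'d) \<Rightarrow> real" where
  "pdt f = (\<lambda>p. frechet_derivative f (at p) (1, 0))"

definition pdx :: "'d::finite \<Rightarrow> (real \<times> (real^'d) \<Rightarrow> real) \<Rightarrow> real \<times> (real^'d) \<Rightarrow> real" where
  "pdx l f = (\<lambda>p. frechet_derivative f (at p) (0, axis l 1))"

definition multi :: "nat \<Rightarrow> ('d::finite \<Rightarrow> nat) set" where
  "multi k = {n. (\<Sum>l\<in>UNIV. n l) = k}"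

definition cpow :: "int^'d \<Rightarrow> ('d::finite \<Rightarrow> nat) \<Rightarrow> real" where
  "cpow c n = (\<Prod>l\<in>UNIV. (real_of_int (c $ l)) ^ (n l))"

definition nfact :: "('d::finite \<Rightarrow> nat) \<Rightarrow> real" where
  "nfact n = (\<Prod>l\<in>UNIV. fact (n l))"

text \<open>partial_x^n: apply pdx l exactly n l times for every l (order is irrelevant for
smooth functions).\<close>
definition pmulti :: "('d::finite \<Rightarrow> nat) \<Rightarrow> (real \<times> (real^'d) \<Rightarrow> real) \<Rightarrow> real \<times> (real^'d) \<Rightarrow> real" where
  "pmulti n f = foldr pdx (SOME xs. mset xs = (\<Sum>l\<in>UNIV. replicate_mset (n l) l)) f"

definition cr :: "int^'d \<Rightarrow> real^'d" where
  "cr c = (\<chi> l. real_of_int (c $ l))"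

text \<open>A(x^c) and S(x^c) acting in space on functions of (t,x); (x^c phi)(x) = phi(x - dx c).\<close>
definition Aop :: "real \<Rightarrow> int^'d \<Rightarrow> (real \<times> (real^'d) \<Rightarrow> real) \<Rightarrow> real \<times> (real^'d) \<Rightarrow> real" where
  "Aop dx c f = (\<lambda>(t,y). (f (t, y - dx *\<^sub>R cr c) - f (t, y + dx *\<^sub>R cr c)) / 2)"

definition Sop :: "real \<Rightarrow> int^'d \<Rightarrow> (real \<times> (real^'d) \<Rightarrow> real) \<Rightarrow> real \<times> (real^'d) \<Rightarrow> real" where
  "Sop dx c f = (\<lambda>(t,y). (f (t, y - dx *\<^sub>R cr c) + f (t, y + dx *\<^sub>R cr c)) / 2)"

definition p2_apply :: "real \<Rightarrow> nat \<Rightarrow> real \<Rightarrow> (nat \<Rightarrow> real) \<Rightarrow> (nat \<Rightarrow> int^'d) \<Rightarrow> real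
    \<Rightarrow> (real \<times> (real^'d) \<Rightarrow> real) \<Rightarrow> real \<times> (real^'d) \<Rightarrow> real" where
  "p2_apply lam W s eps c dx f = (\<lambda>(t,y). let dt = dx / lam in
      f (t + 2*dt, y) + (s - 2) * f (t + dt, y) + (1 - s) * f (t, y)
      - s * (\<Sum>j=1..W. eps (2*j) * Aop dx (c (2*j)) f (t + dt, y))
      + (s - 2) * (\<Sum>j=1..W. eps (2*j+1) * (Sop dx (c (2*j)) f (t + dt, y) - f (t + dt, y))))"

definition Mmat :: "nat \<Rightarrow> nat \<Rightarrow> nat \<Rightarrow> real" where
  "Mmat q i j = (if i \<in> {1..q} \<and> j \<in> {1..q} then
      (if i = 1 then 1
       else if even i then (if j = i then 1 else if j = i + 1 then -1 else 0)
       else (if j = i - 1 then 1 else if j = i then 1 else 0))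
     else 0)"

definition Minv :: "nat \<Rightarrow> nat \<Rightarrow> nat \<Rightarrow> real" where
  "Minv q = (SOME N. \<forall>i\<in>{1..q}. \<forall>j\<in>{1..q}.
      (\<Sum>k=1..q. Mmat q i k * N k j) = (if i = j then 1 else 0))"

definition svec :: "real \<Rightarrow> real \<Rightarrow> nat \<Rightarrow> real" where
  "svec s1 s i = (if i = 1 then s1 else if even i then s else 2 - s)"

definition Kmat :: "real \<Rightarrow> real \<Rightarrow> (nat \<Rightarrow> real) \<Rightarrow> nat \<Rightarrow> nat \<Rightarrow> real" where
  "Kmat s1 s eps i j = (if i = j then 1 else 0)
      - svec s1 s i * ((if i = j then 1 else 0) - eps i * (if j = 1 then 1 else 0))"

text \<open>((E w)_1 u)(y), E = T K, T = M diag(x^{c_1},...,x^{c_q}) M^{-1}.\<close>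
definition E1_apply :: "nat \<Rightarrow> real \<Rightarrow> real \<Rightarrow> (nat \<Rightarrow> real) \<Rightarrow> (nat \<Rightarrow> int^'d) \<Rightarrow> real
    \<Rightarrow> (nat \<Rightarrow> real) \<Rightarrow> (real^'d \<Rightarrow> real) \<Rightarrow> real^'d \<Rightarrow> real" where
  "E1_apply W s1 s eps c dx w u = (\<lambda>y. let q = 1 + 2*W in
      (\<Sum>k=1..q. Mmat q 1 k *
         (\<Sum>j=1..q. Minv q k j * (\<Sum>i=1..q. Kmat s1 s eps j i * w i)
                     * u (y - dx *\<^sub>R cr (c k)))))"

definition Aop1 :: "nat \<Rightarrow> (nat \<Rightarrow> real) \<Rightarrow> (nat \<Rightarrow> int^'d::finite)
    \<Rightarrow> (real \<times> (real^'d) \<Rightarrow> real) \<Rightarrow> real \<times> (real^'d) \<Rightarrow> real" where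
  "Aop1 W eps c f = (\<lambda>p. \<Sum>j=1..W. eps (2*j) *
      (\<Sum>n\<in>multi 1. cpow (c (2*j)) n * pmulti n f p))"

definition Bop2 :: "nat \<Rightarrow> (nat \<Rightarrow> real) \<Rightarrow> (nat \<Rightarrow> int^'d::finite)
    \<Rightarrow> (real \<times> (real^'d) \<Rightarrow> real) \<Rightarrow> real \<times> (real^'d) \<Rightarrow> real" where
  "Bop2 W gam c f = (\<lambda>p. \<Sum>j=1..W. gam j *
      (\<Sum>n\<in>multi 2. cpow (c (2*j)) n / nfact n * pmulti n f p))"

end

theory Submission
  imports Defs
begin

(* Both schemes are finite linear combinations of values of f at points p + dx v, and a smooth f
   satisfies f (p + h v) = f p + h D_v f p + h^2/2 D_v D_v f p + O(h^3), where D_v is the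
   directional derivative and D_u D_v f p is symmetric (Schwarz) and bilinear in (u, v).
   The multi-index sums of order one and two are D_c and D_c D_c / 2 along the space direction
   (0, c), so every operator of the modified equations is such a directional derivative; in
   particular L f = d_t f + lam A f is the derivative along (1, lam V) with V = sum eps_2j c_2j.
   For the initialisation the inverse moment matrix is computed explicitly, which turns (E w)_1
   into a centred stencil around x. Expanding every shifted value, the scheme divided by the time
   step equals the claimed operators plus dx (alpha d_t + beta . grad) L f, the terms by which the
   second time derivatives d_t d_t f and d_t A f are eliminated through L f = 0, up to a
   combination of Taylor remainders, which is O(dx^3) / dx = O(dx^2). *)

section \<open>Directional derivatives of smooth functions\<close>

definition dderiv :: "'a::real_normed_vector \<Rightarrow> ('a \<Rightarrow> real) \<Rightarrow> 'a \<Rightarrow> real" where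
  "dderiv v f = (\<lambda>p. frechet_derivative f (at p) v)"

lemma smooth_fun_has_derivative:
  "smooth_fun f \<Longrightarrow> (f has_derivative frechet_derivative f (at p)) (at p)"
  by (erule smooth_fun.cases) (simp add: frechet_derivative_works)

lemma smooth_fun_continuous: "smooth_fun f \<Longrightarrow> isCont f p"
  using smooth_fun_has_derivative has_derivative_continuous by blast

lemma smooth_fun_dderiv: "smooth_fun f \<Longrightarrow> smooth_fun (dderiv v f)"
  unfolding dderiv_def by (erule smooth_fun.cases) auto

lemma smooth_fun_dderiv_iterate: "smooth_fun f \<Longrightarrow> smooth_fun ((dderiv v ^^ m) f)"
  by (induction m) (auto intro: smooth_fun_dderiv)

lemma linear_dderiv: "smooth_fun f \<Longrightarrow> linear (\<lambda>v. dderiv v f p)"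
  unfolding dderiv_def using smooth_fun_has_derivative has_derivative_linear by blast

lemma
  assumes "smooth_fun f"
  shows dderiv_add: "dderiv (u + v) f p = dderiv u f p + dderiv v f p"
    and dderiv_diff: "dderiv (u - v) f p = dderiv u f p - dderiv v f p"
    and dderiv_zero: "dderiv 0 f p = 0"
    and dderiv_scaleR: "dderiv (a *\<^sub>R u) f p = a * dderiv u f p"
    and dderiv_sum: "dderiv (\<Sum>j\<in>A. w j) f p = (\<Sum>j\<in>A. dderiv (w j) f p)"
proof -
  interpret linear "\<lambda>v. dderiv v f p" by (rule linear_dderiv[OF assms])
  show "dderiv (u + v) f p = dderiv u f p + dderiv v f p" by (rule add)
  show "dderiv (u - v) f p = dderiv u f p - dderiv v f p" by (rule diff)
  show "dderiv 0 f p = 0" by (rule zero)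
  show "dderiv (a *\<^sub>R u) f p = a * dderiv u f p" by (simp add: scale)
  show "dderiv (\<Sum>j\<in>A. w j) f p = (\<Sum>j\<in>A. dderiv (w j) f p)" by (rule sum)
qed

lemma has_real_derivative_along_line:
  assumes "smooth_fun f"
  shows "((\<lambda>\<tau>. f (q + \<tau> *\<^sub>R v)) has_real_derivative dderiv v f (q + \<tau> *\<^sub>R v)) (at \<tau>)"
proof -
  let ?p = "q + \<tau> *\<^sub>R v"
  have "((\<lambda>\<tau>. f (q + \<tau> *\<^sub>R v)) has_derivative (\<lambda>h. frechet_derivative f (at ?p) (h *\<^sub>R v))) (at \<tau>)"
    by (rule has_derivative_compose[OF _ smooth_fun_has_derivative[OF assms]])
       (auto intro!: derivative_eq_intros)
  moreover have "(\<lambda>h. frechet_derivative f (at ?p) (h *\<^sub>R v)) = (*) (dderiv v f ?p)"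
    using dderiv_scaleR[OF assms, of _ v ?p] by (auto simp: dderiv_def fun_eq_iff mult.commute)
  ultimately show ?thesis
    by (simp add: has_field_derivative_def)
qed

definition taylor2_rem :: "('a::real_normed_vector \<Rightarrow> real) \<Rightarrow> 'a \<Rightarrow> 'a \<Rightarrow> real \<Rightarrow> real" where
  "taylor2_rem f p v h = f (p + h *\<^sub>R v) - f p - h * dderiv v f p - h\<^sup>2 / 2 * dderiv v (dderiv v f) p"

lemma taylor2_expansion:
  "f (p + h *\<^sub>R v) = f p + h * dderiv v f p + h\<^sup>2 / 2 * dderiv v (dderiv v f) p + taylor2_rem f p v h"
  unfolding taylor2_rem_def by simp

lemma taylor2_rem_bigo:
  assumes sm: "smooth_fun f"
  shows "taylor2_rem f p v \<in> O[at_right 0](\<lambda>h. h ^ 3)"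
proof -
  define g where "g m t = (dderiv v ^^ m) f (p + t *\<^sub>R v)" for m t
  have "continuous_on {0..1} (g 3)"
    unfolding g_def
    by (intro continuous_at_imp_continuous_on ballI continuous_intros
          isCont_o2[OF _ smooth_fun_continuous[OF smooth_fun_dderiv_iterate[OF sm]]])
  then have "bounded (g 3 ` {0..1})"
    by (intro compact_imp_bounded compact_continuous_image) auto
  then obtain M where M: "\<And>t. t \<in> {0..1} \<Longrightarrow> \<bar>g 3 t\<bar> \<le> M"
    unfolding bounded_iff by (auto simp del: atLeastAtMost_iff)
  have "\<forall>\<^sub>F h in at_right 0. \<bar>taylor2_rem f p v h\<bar> \<le> M / 6 * \<bar>h ^ 3\<bar>"
    using eventually_at_right_real[OF zero_less_one]
  proof eventually_elim
    case (elim h)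
    then have h: "0 < h" "h < 1" by auto
    have "\<forall>m t. m < 3 \<and> 0 \<le> t \<and> t \<le> h \<longrightarrow> (g m has_real_derivative g (Suc m) t) (at t)"
      unfolding g_def using has_real_derivative_along_line[OF smooth_fun_dderiv_iterate[OF sm]] by simp
    then obtain t where t: "0 < t" "t < h"
      and taylor: "g 0 h = (\<Sum>m<3. g m 0 / fact m * h ^ m) + g 3 t / fact 3 * h ^ 3"
      using Maclaurin[OF h(1), of 3 g] by auto
    have "taylor2_rem f p v h = g 3 t / 6 * h ^ 3"
      using taylor by (simp add: taylor2_rem_def g_def eval_nat_numeral fact_numeral)
    then have "\<bar>taylor2_rem f p v h\<bar> = \<bar>g 3 t\<bar> / 6 * \<bar>h ^ 3\<bar>"
      by (simp only: abs_mult abs_divide abs_numeral)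
    also have "\<dots> \<le> M / 6 * \<bar>h ^ 3\<bar>"
      using M[of t] t h by (intro mult_right_mono divide_right_mono) auto
    finally show ?case .
  qed
  then have "\<forall>\<^sub>F h in at_right 0. \<bar>taylor2_rem f p v h\<bar> \<le> max (M / 6) 1 * \<bar>h ^ 3\<bar>"
    by eventually_elim (meson abs_ge_zero max.cobounded1 mult_right_mono order_trans)
  then show ?thesis
    by (intro landau_o.bigI[of "max (M / 6) 1"]) auto
qed

lemma second_difference_mean_value:
  assumes sm: "smooth_fun f" and h: "0 < h"
  obtains \<xi> \<eta> where "0 < \<xi>" "\<xi> < h" "0 < \<eta>" "\<eta> < h"
    "(f (p + h *\<^sub>R u + h *\<^sub>R v) - f (p + h *\<^sub>R u) - f (p + h *\<^sub>R v) + f p) / h\<^sup>2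
      = dderiv v (dderiv u f) (p + \<xi> *\<^sub>R u + \<eta> *\<^sub>R v)"
proof -
  define \<phi> where "\<phi> \<tau> = f ((p + h *\<^sub>R v) + \<tau> *\<^sub>R u) - f (p + \<tau> *\<^sub>R u)" for \<tau>
  define \<phi>' where "\<phi>' \<tau> = dderiv u f ((p + h *\<^sub>R v) + \<tau> *\<^sub>R u) - dderiv u f (p + \<tau> *\<^sub>R u)" for \<tau>
  have "\<forall>\<tau>. 0 \<le> \<tau> \<and> \<tau> \<le> h \<longrightarrow> (\<phi> has_real_derivative \<phi>' \<tau>) (at \<tau>)"
    unfolding \<phi>_def \<phi>'_def by (intro allI impI DERIV_diff has_real_derivative_along_line sm)
  then obtain \<xi> where \<xi>: "0 < \<xi>" "\<xi> < h" and mvt1: "\<phi> h - \<phi> 0 = (h - 0) * \<phi>' \<xi>"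
    using MVT2[OF h, of \<phi> \<phi>'] by blast
  define \<psi> where "\<psi> \<sigma> = dderiv u f ((p + \<xi> *\<^sub>R u) + \<sigma> *\<^sub>R v)" for \<sigma>
  define \<psi>' where "\<psi>' \<sigma> = dderiv v (dderiv u f) ((p + \<xi> *\<^sub>R u) + \<sigma> *\<^sub>R v)" for \<sigma>
  have "\<forall>\<sigma>. 0 \<le> \<sigma> \<and> \<sigma> \<le> h \<longrightarrow> (\<psi> has_real_derivative \<psi>' \<sigma>) (at \<sigma>)"
    unfolding \<psi>_def \<psi>'_def by (intro allI impI has_real_derivative_along_line smooth_fun_dderiv sm)
  then obtain \<eta> where \<eta>: "0 < \<eta>" "\<eta> < h" and mvt2: "\<psi> h - \<psi> 0 = (h - 0) * \<psi>' \<eta>"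
    using MVT2[OF h, of \<psi> \<psi>'] by blast
  have "f (p + h *\<^sub>R u + h *\<^sub>R v) - f (p + h *\<^sub>R u) - f (p + h *\<^sub>R v) + f p = \<phi> h - \<phi> 0"
    unfolding \<phi>_def by (simp add: add_ac)
  also have "\<dots> = h * (\<psi> h - \<psi> 0)"
    unfolding mvt1 \<phi>'_def \<psi>_def by (simp add: add_ac)
  also have "\<dots> = h\<^sup>2 * \<psi>' \<eta>"
    unfolding mvt2 by (simp add: power2_eq_square)
  finally show ?thesis
    using that[OF \<xi> \<eta>] h unfolding \<psi>'_def by (simp add: add_ac)
qed

lemma second_difference_tendsto:
  assumes sm: "smooth_fun f"
  shows "((\<lambda>h. (f (p + h *\<^sub>R u + h *\<^sub>R v) - f (p + h *\<^sub>R u) - f (p + h *\<^sub>R v) + f p) / h\<^sup>2)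
          \<longlongrightarrow> dderiv v (dderiv u f) p) (at_right 0)"
proof (rule tendstoI)
  fix e :: real assume e: "0 < e"
  have "isCont (dderiv v (dderiv u f)) p"
    by (intro smooth_fun_continuous smooth_fun_dderiv sm)
  then obtain d where d: "0 < d"
    and close: "\<And>q. dist q p < d \<Longrightarrow> dist (dderiv v (dderiv u f) q) (dderiv v (dderiv u f) p) < e"
    using e unfolding continuous_at_eps_delta by blast
  define K where "K = norm u + norm v + 1"
  have K: "0 < K"
    unfolding K_def by (simp add: add_nonneg_pos)
  have "0 < d / K"
    using d K by simp
  from eventually_at_right_real[OF this]
  show "\<forall>\<^sub>F h in at_right 0. dist ((f (p + h *\<^sub>R u + h *\<^sub>R v) - f (p + h *\<^sub>R u) - f (p + h *\<^sub>R v) + f p) / h\<^sup>2)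
          (dderiv v (dderiv u f) p) < e"
  proof eventually_elim
    case (elim h)
    then have h: "0 < h" "h * K < d"
      using K by (simp_all add: pos_less_divide_eq)
    obtain \<xi> \<eta> where "0 < \<xi>" "\<xi> < h" "0 < \<eta>" "\<eta> < h"
      and eq: "(f (p + h *\<^sub>R u + h *\<^sub>R v) - f (p + h *\<^sub>R u) - f (p + h *\<^sub>R v) + f p) / h\<^sup>2
        = dderiv v (dderiv u f) (p + \<xi> *\<^sub>R u + \<eta> *\<^sub>R v)"
      using second_difference_mean_value[OF sm h(1)] by blast
    then have "dist (p + \<xi> *\<^sub>R u + \<eta> *\<^sub>R v) p \<le> h * norm u + h * norm v"
      by (auto simp: dist_norm intro!: norm_triangle_le add_mono mult_right_mono)
    also have "\<dots> < d"
      using h unfolding K_def by (simp add: algebra_simps)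
    finally show ?case
      unfolding eq by (rule close)
  qed
qed

lemma dderiv_commute:
  assumes "smooth_fun f"
  shows "dderiv u (dderiv v f) p = dderiv v (dderiv u f) p"
proof -
  have "((\<lambda>h. (f (p + h *\<^sub>R u + h *\<^sub>R v) - f (p + h *\<^sub>R u) - f (p + h *\<^sub>R v) + f p) / h\<^sup>2)
          \<longlongrightarrow> dderiv u (dderiv v f) p) (at_right 0)"
    using second_difference_tendsto[OF assms, of p v u] by (simp add: algebra_simps)
  from tendsto_unique[OF _ this second_difference_tendsto[OF assms]] show ?thesis
    by simp
qed

lemma
  assumes "smooth_fun f"
  shows dderiv2_add: "dderiv u (dderiv (v + w) f) p = dderiv u (dderiv v f) p + dderiv u (dderiv w f) p"
    and dderiv2_diff: "dderiv u (dderiv (v - w) f) p = dderiv u (dderiv v f) p - dderiv u (dderiv w f) p"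
    and dderiv2_scaleR: "dderiv u (dderiv (a *\<^sub>R v) f) p = a * dderiv u (dderiv v f) p"
    and dderiv2_sum: "dderiv u (dderiv (\<Sum>j\<in>A. z j) f) p = (\<Sum>j\<in>A. dderiv u (dderiv (z j) f) p)"
proof -
  have swap: "dderiv u (dderiv z f) p = dderiv z (dderiv u f) p" for z
    by (rule dderiv_commute[OF assms])
  note sm = smooth_fun_dderiv[OF assms, of u]
  show "dderiv u (dderiv (v + w) f) p = dderiv u (dderiv v f) p + dderiv u (dderiv w f) p"
    unfolding swap by (rule dderiv_add[OF sm])
  show "dderiv u (dderiv (v - w) f) p = dderiv u (dderiv v f) p - dderiv u (dderiv w f) p"
    unfolding swap by (rule dderiv_diff[OF sm])
  show "dderiv u (dderiv (a *\<^sub>R v) f) p = a * dderiv u (dderiv v f) p"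
    unfolding swap by (rule dderiv_scaleR[OF sm])
  show "dderiv u (dderiv (\<Sum>j\<in>A. z j) f) p = (\<Sum>j\<in>A. dderiv u (dderiv (z j) f) p)"
    unfolding swap by (rule dderiv_sum[OF sm])
qed

lemma
  assumes sm: "smooth_fun f"
  shows centred_difference_odd: "(f (p + h *\<^sub>R (a - u)) - f (p + h *\<^sub>R (a + u))) / 2
      = - h * dderiv u f p - h\<^sup>2 * dderiv a (dderiv u f) p
        + (taylor2_rem f p (a - u) h - taylor2_rem f p (a + u) h) / 2"
    and centred_difference_even: "(f (p + h *\<^sub>R (a - u)) + f (p + h *\<^sub>R (a + u))) / 2 - f (p + h *\<^sub>R a)
      = h\<^sup>2 / 2 * dderiv u (dderiv u f) p
        + ((taylor2_rem f p (a - u) h + taylor2_rem f p (a + u) h) / 2 - taylor2_rem f p a h)"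
  unfolding taylor2_expansion[of f p h]
  by (simp_all add: dderiv_add[OF sm] dderiv_diff[OF sm] dderiv_add[OF smooth_fun_dderiv[OF sm]]
      dderiv_diff[OF smooth_fun_dderiv[OF sm]] dderiv2_add[OF sm] dderiv2_diff[OF sm]
      dderiv_commute[OF sm, of u a] field_simps power2_eq_square)

lemma sum_centred_difference_odd:
  assumes sm: "smooth_fun f"
  shows "(\<Sum>j\<in>J. \<gamma> j * ((f (p + h *\<^sub>R (a - u j)) - f (p + h *\<^sub>R (a + u j))) / 2))
      = - h * dderiv (\<Sum>j\<in>J. \<gamma> j *\<^sub>R u j) f p - h\<^sup>2 * dderiv a (dderiv (\<Sum>j\<in>J. \<gamma> j *\<^sub>R u j) f) p
        + (\<Sum>j\<in>J. \<gamma> j * ((taylor2_rem f p (a - u j) h - taylor2_rem f p (a + u j) h) / 2))"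
proof -
  have "(\<Sum>j\<in>J. \<gamma> j * ((f (p + h *\<^sub>R (a - u j)) - f (p + h *\<^sub>R (a + u j))) / 2))
      = (\<Sum>j\<in>J. - h * (\<gamma> j * dderiv (u j) f p) - h\<^sup>2 * (\<gamma> j * dderiv a (dderiv (u j) f) p)
          + \<gamma> j * ((taylor2_rem f p (a - u j) h - taylor2_rem f p (a + u j) h) / 2))"
    unfolding centred_difference_odd[OF sm] by (intro sum.cong refl) (simp add: algebra_simps)
  then show ?thesis
    by (simp only: sum.distrib sum_subtractf dderiv_sum[OF sm] dderiv_scaleR[OF sm]
        dderiv2_sum[OF sm] dderiv2_scaleR[OF sm] flip: sum_distrib_left)
qed

lemma sum_centred_difference_even:
  assumes sm: "smooth_fun f"
  shows "(\<Sum>j\<in>J. \<gamma> j * ((f (p + h *\<^sub>R (a - u j)) + f (p + h *\<^sub>R (a + u j))) / 2 - f (p + h *\<^sub>R a)))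
      = h\<^sup>2 / 2 * (\<Sum>j\<in>J. \<gamma> j * dderiv (u j) (dderiv (u j) f) p)
        + (\<Sum>j\<in>J. \<gamma> j * ((taylor2_rem f p (a - u j) h + taylor2_rem f p (a + u j) h) / 2
                               - taylor2_rem f p a h))"
proof -
  have "(\<Sum>j\<in>J. \<gamma> j * ((f (p + h *\<^sub>R (a - u j)) + f (p + h *\<^sub>R (a + u j))) / 2 - f (p + h *\<^sub>R a)))
      = (\<Sum>j\<in>J. h\<^sup>2 / 2 * (\<gamma> j * dderiv (u j) (dderiv (u j) f) p)
          + \<gamma> j * ((taylor2_rem f p (a - u j) h + taylor2_rem f p (a + u j) h) / 2 - taylor2_rem f p a h))"
    unfolding centred_difference_even[OF sm] by (intro sum.cong refl) (simp add: algebra_simps)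
  then show ?thesis
    by (simp only: sum.distrib flip: sum_distrib_left)
qed

lemma bigo_const_mult: "f \<in> O[F](g) \<Longrightarrow> (\<lambda>x. c * f x) \<in> O[F](g)"
  by simp

lemma bigo_divide_const: "f \<in> O[F](g) \<Longrightarrow> (\<lambda>x. f x / c) \<in> O[F](g)"
  by (cases "c = 0") simp_all

lemma bigo_cube_divide:
  fixes g :: "real \<Rightarrow> real"
  assumes "g \<in> O[at_right 0](\<lambda>h. h ^ 3)"
  shows "(\<lambda>h. g h / h) \<in> O[at_right 0](\<lambda>h. h\<^sup>2)"
proof -
  have nz: "\<forall>\<^sub>F h in at_right 0. h \<noteq> (0::real)"
    by (simp add: eventually_at_filter)
  have "(\<lambda>h. g h / h) \<in> O[at_right 0](\<lambda>h. h ^ 3 / h)"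
    by (rule landau_o.big.divide_right[where h = "\<lambda>x. x", OF nz assms])
  also have "(\<lambda>h::real. h ^ 3 / h) \<in> \<Theta>[at_right 0](\<lambda>h. h\<^sup>2)"
    using nz by (intro bigthetaI_cong) (auto elim!: eventually_mono simp: power2_eq_square power3_eq_cube)
  finally show ?thesis .
qed

section \<open>Partial derivatives and multi-index sums\<close>

lemma pdt_eq_dderiv: "pdt = dderiv (1, 0)"
  unfolding pdt_def dderiv_def ..

lemma pdx_eq_dderiv: "pdx l = dderiv (0, axis l 1)"
  unfolding pdx_def dderiv_def ..

lemma taylor2_expansion_pdt:
  assumes sm: "smooth_fun f"
  shows "f (p + h *\<^sub>R (k *\<^sub>R (1, 0))) = f p + k * h * pdt f p + (k * h)\<^sup>2 / 2 * pdt (pdt f) p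
    + taylor2_rem f p (k *\<^sub>R (1, 0)) h"
  unfolding taylor2_expansion[of f p h] pdt_eq_dderiv
  by (simp only: dderiv_scaleR[OF sm] dderiv_scaleR[OF smooth_fun_dderiv[OF sm]] dderiv2_scaleR[OF sm])
     (simp add: power2_eq_square algebra_simps)

lemma zero_pair_eq_sum_axis: "(0, x) = (\<Sum>l\<in>UNIV. x $ l *\<^sub>R (0, axis l 1))"
  by (simp add: prod_eq_iff fst_sum snd_sum vec_eq_iff sum_component axis_def if_distrib cong: if_cong)

lemma dderiv_space_eq_sum_pdx:
  assumes "smooth_fun g"
  shows "dderiv (0, x) g p = (\<Sum>l\<in>UNIV. x $ l * pdx l g p)"
  by (subst zero_pair_eq_sum_axis) (simp only: dderiv_sum[OF assms] dderiv_scaleR[OF assms] pdx_eq_dderiv)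

lemma pmulti_eq_foldr:
  obtains xs where "mset xs = (\<Sum>l\<in>UNIV. replicate_mset (n l) l)" "pmulti n g = foldr pdx xs g"
  using someI_ex[OF ex_mset] unfolding pmulti_def by blast

lemma count_sum_replicate_mset: "count (\<Sum>k\<in>UNIV. replicate_mset (n k) k) x = n (x::'a::finite)"
  by (simp add: count_sum)

definition unit_multi :: "'d::finite \<Rightarrow> 'd \<Rightarrow> nat" where
  "unit_multi l = (\<lambda>k. if k = l then 1 else 0)"

lemma sum_unit_multi: "(\<Sum>k\<in>UNIV. unit_multi l k) = 1"
  unfolding unit_multi_def by simp

lemma inj_unit_multi: "inj unit_multi"
  unfolding inj_def unit_multi_def fun_eq_iff by (metis one_neq_zero)

lemma multi_1_eq_range: "multi 1 = range unit_multi"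
proof
  show "range unit_multi \<subseteq> multi 1"
    unfolding multi_def using sum_unit_multi by auto
next
  show "multi 1 \<subseteq> range unit_multi"
  proof
    fix n assume "n \<in> multi 1"
    then have sum_n: "(\<Sum>k\<in>UNIV. n k) = 1"
      unfolding multi_def by simp
    then obtain l where "n l \<noteq> 0"
      by (metis sum.neutral zero_neq_one)
    moreover have "n l + (\<Sum>k\<in>UNIV - {l}. n k) = 1"
      using sum_n by (simp add: sum.remove)
    ultimately have "n l = 1" "(\<Sum>k\<in>UNIV - {l}. n k) = 0"
      by linarith+
    then have "n = unit_multi l"
      unfolding unit_multi_def by (auto simp: fun_eq_iff)
    then show "n \<in> range unit_multi" by simp
  qed
qed

lemma mset_unit_multi: "(\<Sum>k\<in>UNIV. replicate_mset (unit_multi l k) k) = {#l#}"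
  by (simp add: multiset_eq_iff count_sum_replicate_mset unit_multi_def)

lemma pmulti_unit_multi: "pmulti (unit_multi l) g = pdx l g"
proof -
  obtain xs where "mset xs = (\<Sum>k\<in>UNIV. replicate_mset (unit_multi l k) k)"
    and "pmulti (unit_multi l) g = foldr pdx xs g"
    by (rule pmulti_eq_foldr)
  then show ?thesis
    unfolding mset_unit_multi by (cases xs) auto
qed

lemma cpow_unit_multi: "cpow c (unit_multi l) = of_int (c $ l)"
  unfolding cpow_def unit_multi_def by (simp add: if_distrib cong: if_cong)

lemma sum_multi_1:
  assumes "smooth_fun g"
  shows "(\<Sum>n\<in>multi 1. cpow c n * pmulti n g p) = dderiv (0, cr c) g p"
  unfolding multi_1_eq_range
  by (simp add: sum.reindex[OF inj_unit_multi] cpow_unit_multi pmulti_unit_multi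
      dderiv_space_eq_sum_pdx[OF assms] cr_def)

definition pair_multi :: "'d::finite \<Rightarrow> 'd \<Rightarrow> 'd \<Rightarrow> nat" where
  "pair_multi l m = (\<lambda>k. unit_multi l k + unit_multi m k)"

lemma multi_2_eq_image: "multi 2 = case_prod pair_multi ` UNIV"
proof
  show "case_prod pair_multi ` UNIV \<subseteq> multi 2"
    unfolding multi_def pair_multi_def by (auto simp: sum.distrib sum_unit_multi)
next
  show "multi 2 \<subseteq> case_prod pair_multi ` UNIV"
  proof
    fix n assume "n \<in> multi 2"
    then have sum_n: "(\<Sum>k\<in>UNIV. n k) = 2"
      unfolding multi_def by simp
    then obtain l where "n l \<noteq> 0"
      by (metis sum.neutral zero_neq_numeral)
    then have le: "unit_multi l k \<le> n k" for k
      unfolding unit_multi_def by auto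
    have "(\<Sum>k\<in>UNIV. n k - unit_multi l k) = (\<Sum>k\<in>UNIV. n k) - (\<Sum>k\<in>UNIV. unit_multi l k)"
      using le by (intro sum_subtractf_nat) auto
    then have "(\<lambda>k. n k - unit_multi l k) \<in> multi 1"
      unfolding multi_def using sum_n sum_unit_multi[of l] by simp
    then obtain m where "(\<lambda>k. n k - unit_multi l k) = unit_multi m"
      unfolding multi_1_eq_range by blast
    then have "n = pair_multi l m"
      using le unfolding pair_multi_def fun_eq_iff by (metis le_add_diff_inverse)
    then show "n \<in> case_prod pair_multi ` UNIV"
      by auto
  qed
qed

lemma mset_pair_multi: "(\<Sum>k\<in>UNIV. replicate_mset (pair_multi l m k) k) = {#l, m#}"
  by (simp add: multiset_eq_iff count_sum_replicate_mset pair_multi_def unit_multi_def)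

lemma pair_multi_eq_iff: "pair_multi a b = pair_multi l m \<longleftrightarrow> (a = l \<and> b = m) \<or> (a = m \<and> b = l)"
proof
  assume "pair_multi a b = pair_multi l m"
  then have "{#a, b#} = {#l, m#}"
    using mset_pair_multi[of a b] mset_pair_multi[of l m] by simp
  then show "(a = l \<and> b = m) \<or> (a = m \<and> b = l)"
    by (auto simp: add_eq_conv_ex)
qed (auto simp: pair_multi_def fun_eq_iff)

lemma pmulti_pair_multi:
  assumes "smooth_fun g"
  shows "pmulti (pair_multi l m) g p = pdx l (pdx m g) p"
proof -
  obtain xs where "mset xs = (\<Sum>k\<in>UNIV. replicate_mset (pair_multi l m k) k)"
    and pmulti: "pmulti (pair_multi l m) g = foldr pdx xs g"
    by (rule pmulti_eq_foldr)
  then have "xs = [l, m] \<or> xs = [m, l]"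
    unfolding mset_pair_multi
    by (cases xs rule: remdups_adj.cases) (auto simp: add_eq_conv_ex)
  then show ?thesis
    unfolding pmulti pdx_eq_dderiv by (auto intro: dderiv_commute[OF assms])
qed

lemma cpow_pair_multi: "cpow c (pair_multi l m) = of_int (c $ l) * of_int (c $ m)"
  unfolding cpow_def pair_multi_def
  by (simp add: power_add prod.distrib flip: cpow_def) (simp add: cpow_unit_multi)

lemma nfact_pair_multi: "nfact (pair_multi l m) = (if l = m then 2 else 1)"
proof -
  have "fact (pair_multi l m k) = (if k = l \<and> l = m then 2 else 1 :: real)" for k
    by (simp add: pair_multi_def unit_multi_def)
  then show ?thesis
    unfolding nfact_def by (cases "l = m") simp_all
qed

lemma card_pair_multi_fiber:
  "card {x. case_prod pair_multi x = pair_multi l m} = (if l = m then 1 else 2)"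
proof -
  have "{x. case_prod pair_multi x = pair_multi l m} = {(l, m), (m, l)}"
    by (auto simp: pair_multi_eq_iff)
  then show ?thesis
    by simp
qed

lemma sum_image_eq_sum_div_card_fiber:
  assumes "finite S"
  shows "(\<Sum>y\<in>h ` S. G y) = (\<Sum>x\<in>S. G (h x) / card {x' \<in> S. h x' = h x})"
proof -
  have "(\<Sum>x\<in>S. G (h x) / card {x' \<in> S. h x' = h x})
      = (\<Sum>y\<in>h ` S. \<Sum>x\<in>{x \<in> S. h x = y}. G y / card {x' \<in> S. h x' = y})"
    by (subst sum.image_gen[OF assms, of _ h]) (intro sum.cong refl; auto)
  also have "\<dots> = (\<Sum>y\<in>h ` S. G y)"
    using assms by (intro sum.cong refl) (auto simp: card_eq_0_iff)
  finally show ?thesis ..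
qed

lemma dderiv2_space_eq_sum_pdx:
  assumes sm: "smooth_fun g"
  shows "dderiv (0, x) (dderiv (0, x) g) p = (\<Sum>l\<in>UNIV. \<Sum>m\<in>UNIV. x $ l * x $ m * pdx l (pdx m g) p)"
proof -
  have inner: "dderiv u (dderiv (0, x) g) p = (\<Sum>m\<in>UNIV. x $ m * dderiv u (pdx m g) p)" for u
    by (subst zero_pair_eq_sum_axis)
       (simp only: dderiv2_sum[OF sm] dderiv2_scaleR[OF sm] pdx_eq_dderiv)
  have "dderiv (0, x) (dderiv (0, x) g) p = (\<Sum>l\<in>UNIV. x $ l * pdx l (dderiv (0, x) g) p)"
    by (rule dderiv_space_eq_sum_pdx[OF smooth_fun_dderiv[OF sm]])
  also have "\<dots> = (\<Sum>l\<in>UNIV. x $ l * (\<Sum>m\<in>UNIV. x $ m * pdx l (pdx m g) p))"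
    unfolding pdx_eq_dderiv[of l for l] inner ..
  finally show ?thesis
    by (simp add: sum_distrib_left mult.assoc)
qed

lemma sum_multi_2:
  assumes sm: "smooth_fun g"
  shows "(\<Sum>n\<in>multi 2. cpow c n / nfact n * pmulti n g p) = dderiv (0, cr c) (dderiv (0, cr c) g) p / 2"
proof -
  let ?c = "\<lambda>l. real_of_int (c $ l)"
  have fiber: "nfact (pair_multi l m) * card {x. case_prod pair_multi x = pair_multi l m} = 2" for l m
    by (simp add: nfact_pair_multi card_pair_multi_fiber)
  have "(\<Sum>n\<in>multi 2. cpow c n / nfact n * pmulti n g p)
      = (\<Sum>(l, m)\<in>UNIV. cpow c (pair_multi l m) / nfact (pair_multi l m) * pmulti (pair_multi l m) g p
           / card {x. case_prod pair_multi x = pair_multi l m})"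
    unfolding multi_2_eq_image by (subst sum_image_eq_sum_div_card_fiber) (simp_all add: split_def)
  also have "\<dots> = (\<Sum>(l, m)\<in>UNIV. ?c l * ?c m * pdx l (pdx m g) p / 2)"
    by (intro sum.cong refl)
       (clarsimp simp: cpow_pair_multi pmulti_pair_multi[OF sm] divide_divide_eq_left fiber)
  also have "\<dots> = (\<Sum>l\<in>UNIV. \<Sum>m\<in>UNIV. ?c l * ?c m * pdx l (pdx m g) p) / 2"
    by (simp add: sum_divide_distrib sum.cartesian_product split_def flip: UNIV_Times_UNIV)
  also have "\<dots> = dderiv (0, cr c) (dderiv (0, cr c) g) p / 2"
    by (simp add: dderiv2_space_eq_sum_pdx[OF sm] cr_def)
  finally show ?thesis .
qed

section \<open>The moment matrix and the initialisation\<close>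

lemma sum_odd_range_split: "(\<Sum>k=1..1+2*(W::nat). g k) = g 1 + (\<Sum>m=1..W. g (2*m) + g (2*m+1))"
proof (induction W)
  case (Suc W)
  have "1 + 2 * Suc W = Suc (Suc (1 + 2*W))"
    by simp
  then show ?case
    using Suc by (simp add: add_ac)
qed simp

lemma odd_range_cases:
  assumes "(i::nat) \<in> {1..1+2*W}"
  obtains "i = 1" | n where "n \<in> {1..W}" "i = 2*n" | n where "n \<in> {1..W}" "i = 2*n+1"
  using assms by (cases "i = 1"; cases "even i") (auto elim!: evenE oddE)

lemma Mmat_first_row_sum: "(\<Sum>k=1..1+2*W. Mmat (1+2*W) 1 k * z k) = (\<Sum>k=1..1+2*W. z k)"
  by (intro sum.cong refl) (simp add: Mmat_def)

lemma Mmat_even_row_sum: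
  assumes "n \<in> {1..W}"
  shows "(\<Sum>k=1..1+2*W. Mmat (1+2*W) (2*n) k * z k) = z (2*n) - z (2*n+1)"
proof -
  have "(\<Sum>k=1..1+2*W. Mmat (1+2*W) (2*n) k * z k)
      = (\<Sum>k=1..1+2*W. (if k = 2*n then z k else 0) - (if k = 2*n+1 then z k else 0))"
    using assms by (intro sum.cong refl) (auto simp: Mmat_def)
  then show ?thesis
    using assms by (simp add: sum_subtractf)
qed

lemma Mmat_odd_row_sum:
  assumes "n \<in> {1..W}"
  shows "(\<Sum>k=1..1+2*W. Mmat (1+2*W) (2*n+1) k * z k) = z (2*n) + z (2*n+1)"
proof -
  have "(\<Sum>k=1..1+2*W. Mmat (1+2*W) (2*n+1) k * z k)
      = (\<Sum>k=1..1+2*W. (if k = 2*n then z k else 0) + (if k = 2*n+1 then z k else 0))"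
    using assms by (intro sum.cong refl) (auto simp: Mmat_def)
  then show ?thesis
    using assms by (simp add: sum.distrib)
qed

definition Mmat_solve :: "nat \<Rightarrow> (nat \<Rightarrow> real) \<Rightarrow> nat \<Rightarrow> real" where
  "Mmat_solve W v k = (if k = 1 then v 1 - (\<Sum>m=1..W. v (2*m+1))
     else if even k then (v k + v (k+1)) / 2 else (v k - v (k-1)) / 2)"

lemma Mmat_Mmat_solve:
  assumes i: "i \<in> {1..1+2*W}"
  shows "(\<Sum>k=1..1+2*W. Mmat (1+2*W) i k * Mmat_solve W v k) = v i"
  using i
proof (cases rule: odd_range_cases)
  case 1
  have "(\<Sum>m=1..W. Mmat_solve W v (2*m) + Mmat_solve W v (2*m+1)) = (\<Sum>m=1..W. v (2*m+1))"
    by (intro sum.cong refl) (auto simp: Mmat_solve_def field_simps)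
  then show ?thesis
    unfolding 1 Mmat_first_row_sum sum_odd_range_split by (simp add: Mmat_solve_def)
next
  case (2 n)
  then show ?thesis
    unfolding 2 Mmat_even_row_sum[OF 2(1)] by (simp add: Mmat_solve_def field_simps)
next
  case (3 n)
  then show ?thesis
    unfolding 3 Mmat_odd_row_sum[OF 3(1)] by (simp add: Mmat_solve_def field_simps)
qed

lemma Mmat_Minv:
  assumes "i \<in> {1..1+2*W}" "j \<in> {1..1+2*W}"
  shows "(\<Sum>k=1..1+2*W. Mmat (1+2*W) i k * Minv (1+2*W) k j) = (if i = j then 1 else 0)"
proof -
  let ?q = "1+2*W"
  have "\<exists>N. \<forall>i\<in>{1..?q}. \<forall>j\<in>{1..?q}. (\<Sum>k=1..?q. Mmat ?q i k * N k j) = (if i = j then 1 else 0)"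
    using Mmat_Mmat_solve by (intro exI[of _ "\<lambda>k j. Mmat_solve W (\<lambda>i. if i = j then 1 else 0) k"]) blast
  from someI_ex[OF this] show ?thesis
    using assms unfolding Minv_def by blast
qed

lemma Mmat_Minv_apply:
  assumes i: "i \<in> {1..1+2*W}"
  shows "(\<Sum>k=1..1+2*W. Mmat (1+2*W) i k * (\<Sum>j=1..1+2*W. Minv (1+2*W) k j * v j)) = v i"
proof -
  let ?q = "1+2*W"
  have "(\<Sum>k=1..?q. Mmat ?q i k * (\<Sum>j=1..?q. Minv ?q k j * v j))
      = (\<Sum>j=1..?q. (\<Sum>k=1..?q. Mmat ?q i k * Minv ?q k j) * v j)"
    unfolding sum_distrib_left by (subst sum.swap) (simp only: sum_distrib_right mult.assoc)
  also have "\<dots> = (\<Sum>j=1..?q. if i = j then v j else 0)"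
    using Mmat_Minv[OF i] by (intro sum.cong refl) auto
  also have "\<dots> = v i"
    using i by simp
  finally show ?thesis .
qed

lemma Kmat_apply:
  assumes "j \<in> {1..1+2*W}"
  shows "(\<Sum>i=1..1+2*W. Kmat s1 s eps j i * w i) = w j - svec s1 s j * (w j - eps j * w 1)"
proof -
  have "(\<Sum>i=1..1+2*W. Kmat s1 s eps j i * w i)
      = (\<Sum>i=1..1+2*W. (if i = j then (1 - svec s1 s j) * w j else 0)
                       + (if i = 1 then svec s1 s j * eps j * w 1 else 0))"
    by (intro sum.cong refl) (auto simp: Kmat_def algebra_simps)
  then show ?thesis
    using assms by (simp add: sum.distrib algebra_simps)
qed

lemma cr_zero: "cr 0 = 0"
  by (simp add: cr_def vec_eq_iff)

lemma cr_neg: "cr (- c) = - cr c"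
  by (simp add: cr_def vec_eq_iff)

lemma E1_apply_eq:
  fixes c :: "nat \<Rightarrow> int^'d::finite" and s1 s :: real and eps w :: "nat \<Rightarrow> real"
  assumes c1: "c 1 = 0" and codd: "\<forall>j\<in>{1..W}. c (2*j+1) = - c (2*j)"
  defines "Kw j \<equiv> \<Sum>i=1..1+2*W. Kmat s1 s eps j i * w i"
  shows "E1_apply W s1 s eps c dx w u y = Kw 1 * u y +
    (\<Sum>j=1..W. Kw (2*j) * ((u (y - dx *\<^sub>R cr (c (2*j))) - u (y + dx *\<^sub>R cr (c (2*j)))) / 2)
       + Kw (2*j+1) * ((u (y - dx *\<^sub>R cr (c (2*j))) + u (y + dx *\<^sub>R cr (c (2*j)))) / 2 - u y))"
proof -
  let ?q = "1+2*W"
  \<comment> \<open>z = M^-1 K w is the post-collision distribution; (E w)_1 shifts each z k by c k and sums\<close>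
  define z where "z k = (\<Sum>j=1..?q. Minv ?q k j * Kw j)" for k
  define U where "U k = u (y - dx *\<^sub>R cr (c k))" for k
  have Mz: "(\<Sum>k=1..?q. Mmat ?q i k * z k) = Kw i" if "i \<in> {1..?q}" for i
    unfolding z_def using that by (rule Mmat_Minv_apply)
  have z1: "z 1 = Kw 1 - (\<Sum>m=1..W. z (2*m) + z (2*m+1))"
    using Mz[of 1] unfolding Mmat_first_row_sum sum_odd_range_split by simp
  have z_pair: "z (2*m) = (Kw (2*m) + Kw (2*m+1)) / 2" "z (2*m+1) = (Kw (2*m+1) - Kw (2*m)) / 2"
    if "m \<in> {1..W}" for m
    using Mz[of "2*m"] Mz[of "2*m+1"] Mmat_even_row_sum[OF that] Mmat_odd_row_sum[OF that] that
    by auto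
  have "E1_apply W s1 s eps c dx w u y = (\<Sum>k=1..?q. Mmat ?q 1 k * (z k * U k))"
    unfolding E1_apply_def Let_def z_def U_def Kw_def[symmetric] sum_distrib_right ..
  also have "\<dots> = (\<Sum>k=1..?q. z k * U k)"
    by (rule Mmat_first_row_sum)
  also have "\<dots> = z 1 * u y + (\<Sum>m=1..W. z (2*m) * U (2*m) + z (2*m+1) * U (2*m+1))"
    unfolding sum_odd_range_split using c1 by (simp add: U_def cr_zero)
  also have "\<dots> = Kw 1 * u y + (\<Sum>m=1..W. Kw (2*m) * ((U (2*m) - U (2*m+1)) / 2)
                                     + Kw (2*m+1) * ((U (2*m) + U (2*m+1)) / 2 - u y))"
  proof -
    have summand: "z (2*m) * U (2*m) + z (2*m+1) * U (2*m+1) - (z (2*m) + z (2*m+1)) * u y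
        = Kw (2*m) * ((U (2*m) - U (2*m+1)) / 2) + Kw (2*m+1) * ((U (2*m) + U (2*m+1)) / 2 - u y)"
      if "m \<in> {1..W}" for m
      unfolding z_pair[OF that] by (simp add: field_simps)
    have "z 1 * u y = Kw 1 * u y - (\<Sum>m=1..W. (z (2*m) + z (2*m+1)) * u y)"
      unfolding z1 by (simp add: left_diff_distrib sum_distrib_right)
    then show ?thesis
      using sum.cong[OF refl summand, of "{1..W}"] by (simp add: sum_subtractf)
  qed
  also have "\<dots> = Kw 1 * u y +
    (\<Sum>j=1..W. Kw (2*j) * ((u (y - dx *\<^sub>R cr (c (2*j))) - u (y + dx *\<^sub>R cr (c (2*j)))) / 2)
       + Kw (2*j+1) * ((u (y - dx *\<^sub>R cr (c (2*j))) + u (y + dx *\<^sub>R cr (c (2*j)))) / 2 - u y))"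
    using codd by (intro arg_cong2[where f = "(+)"] refl sum.cong) (simp_all add: U_def cr_neg)
  finally show ?thesis .
qed

lemma E1_apply_local_init:
  fixes c :: "nat \<Rightarrow> int^'d::finite"
  assumes c1: "c 1 = 0" and codd: "\<forall>j\<in>{1..W}. c (2*j+1) = - c (2*j)"
    and eps1: "eps 1 = 1" and w1: "w 1 = 1" and weven: "\<forall>j\<in>{1..W}. w (2*j) = eps (2*j)"
  shows "E1_apply W s1 s eps c dx w u y = u y +
    (\<Sum>j=1..W. eps (2*j) * ((u (y - dx *\<^sub>R cr (c (2*j))) - u (y + dx *\<^sub>R cr (c (2*j)))) / 2)
       + ((2 - s) * eps (2*j+1) + (s - 1) * w (2*j+1))
         * ((u (y - dx *\<^sub>R cr (c (2*j))) + u (y + dx *\<^sub>R cr (c (2*j)))) / 2 - u y))"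
proof -
  have "(\<Sum>i=1..1+2*W. Kmat s1 s eps 1 i * w i) = 1"
    using Kmat_apply[of 1 W s1 s eps w] eps1 w1 by simp
  moreover have "(\<Sum>i=1..1+2*W. Kmat s1 s eps (2*j) i * w i) = eps (2*j)"
    and "(\<Sum>i=1..1+2*W. Kmat s1 s eps (2*j+1) i * w i) = (2 - s) * eps (2*j+1) + (s - 1) * w (2*j+1)"
    if "j \<in> {1..W}" for j
    using Kmat_apply[of "2*j" W s1 s eps w] Kmat_apply[of "2*j+1" W s1 s eps w] that weven w1
    by (auto simp: svec_def algebra_simps)
  ultimately show ?thesis
    unfolding E1_apply_eq[OF c1 codd] by (auto intro!: sum.cong)
qed

section \<open>The operators of the modified equations\<close>

definition advection_vec :: "nat \<Rightarrow> (nat \<Rightarrow> real) \<Rightarrow> (nat \<Rightarrow> int^'d) \<Rightarrow> real^'d" where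
  "advection_vec W eps c = (\<Sum>j=1..W. eps (2*j) *\<^sub>R cr (c (2*j)))"

lemma zero_advection_vec_eq_sum:
  "(0, advection_vec W eps c) = (\<Sum>j=1..W. eps (2*j) *\<^sub>R (0, cr (c (2*j))))"
  by (simp add: advection_vec_def prod_eq_iff fst_sum snd_sum)

lemma Aop1_eq_dderiv:
  assumes "smooth_fun g"
  shows "Aop1 W eps c g = dderiv (0, advection_vec W eps c) g"
proof
  fix p
  show "Aop1 W eps c g p = dderiv (0, advection_vec W eps c) g p"
    unfolding Aop1_def sum_multi_1[OF assms] zero_advection_vec_eq_sum
    by (simp only: dderiv_sum[OF assms] dderiv_scaleR[OF assms])
qed

lemma smooth_fun_Aop1: "smooth_fun g \<Longrightarrow> smooth_fun (Aop1 W eps c g)"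
  by (simp add: Aop1_eq_dderiv smooth_fun_dderiv)

lemma Bop2_eq_dderiv:
  assumes "smooth_fun g"
  shows "Bop2 W gam c g p = (\<Sum>j=1..W. gam j * dderiv (0, cr (c (2*j))) (dderiv (0, cr (c (2*j))) g) p) / 2"
  unfolding Bop2_def sum_multi_2[OF assms] by (simp add: sum_divide_distrib)

lemma sum_pdx_advection_vec:
  assumes "smooth_fun g"
  shows "(\<Sum>l\<in>UNIV. (k * advection_vec W eps c $ l) * pdx l g p) = k * Aop1 W eps c g p"
  by (simp add: Aop1_eq_dderiv[OF assms] dderiv_space_eq_sum_pdx[OF assms] sum_distrib_left mult.assoc)

lemma transport_eq_dderiv:
  assumes "smooth_fun f"
  shows "(\<lambda>p. pdt f p + lam * Aop1 W eps c f p) = dderiv ((1, 0) + lam *\<^sub>R (0, advection_vec W eps c)) f"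
  by (rule ext) (simp only: pdt_eq_dderiv Aop1_eq_dderiv[OF assms] dderiv_add[OF assms] dderiv_scaleR[OF assms])

lemma smooth_fun_transport:
  "smooth_fun f \<Longrightarrow> smooth_fun (\<lambda>p. pdt f p + lam * Aop1 W eps c f p)"
  by (simp add: transport_eq_dderiv smooth_fun_dderiv)

lemma
  assumes sm: "smooth_fun f"
  shows pdt_transport: "pdt (\<lambda>p. pdt f p + lam * Aop1 W eps c f p) q
      = pdt (pdt f) q + lam * pdt (Aop1 W eps c f) q"
    and Aop1_transport: "Aop1 W eps c (\<lambda>p. pdt f p + lam * Aop1 W eps c f p) q
      = pdt (Aop1 W eps c f) q + lam * Aop1 W eps c (Aop1 W eps c f) q"
  unfolding transport_eq_dderiv[OF sm]
  unfolding pdt_eq_dderiv Aop1_eq_dderiv[OF sm]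
    Aop1_eq_dderiv[OF smooth_fun_dderiv[OF sm]] dderiv2_add[OF sm] dderiv2_scaleR[OF sm]
    dderiv_commute[OF sm, of "(0, advection_vec W eps c)" "(1, 0)"]
  by (rule refl)+

section \<open>Expansion of the schemes\<close>

lemma p2_apply_eq_shifts:
  fixes f :: "real \<times> (real^'d::finite) \<Rightarrow> real"
  assumes a: "a = (1 / lam) *\<^sub>R (1, 0)" and U: "U = (\<lambda>j. (0, cr (c (2*j))))"
  shows "p2_apply lam W s eps c dx f p
      = f (p + dx *\<^sub>R (2 *\<^sub>R a)) + (s - 2) * f (p + dx *\<^sub>R a) + (1 - s) * f p
        - s * (\<Sum>j=1..W. eps (2*j) * ((f (p + dx *\<^sub>R (a - U j)) - f (p + dx *\<^sub>R (a + U j))) / 2))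
        + (s - 2) * (\<Sum>j=1..W. eps (2*j+1)
            * ((f (p + dx *\<^sub>R (a - U j)) + f (p + dx *\<^sub>R (a + U j))) / 2 - f (p + dx *\<^sub>R a)))"
  by (cases p) (simp add: p2_apply_def Let_def Aop_def Sop_def a U algebra_simps)

lemma p2_apply_expansion:
  fixes f :: "real \<times> (real^'d::finite) \<Rightarrow> real"
  assumes sm: "smooth_fun f" and lam: "lam \<noteq> 0"
  shows "(\<lambda>dx. p2_apply lam W s eps c dx f (t, x)
      - (s * dx * (pdt f (t, x) / lam + Aop1 W eps c f (t, x))
         + dx\<^sup>2 * ((s + 2) / (2 * lam\<^sup>2) * pdt (pdt f) (t, x) + s / lam * pdt (Aop1 W eps c f) (t, x)
                   + (s - 2) * Bop2 W (\<lambda>j. eps (2*j+1)) c f (t, x))))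
    \<in> O[at_right 0](\<lambda>dx. dx ^ 3)"
proof -
  define p where "p = (t, x)"
  define a :: "real \<times> (real^'d)" where "a = (1 / lam) *\<^sub>R (1, 0)"
  define U where "U = (\<lambda>j. (0 :: real, cr (c (2*j))))"
  define R where "R v dx = taylor2_rem f p v dx" for v dx
  define Rodd where "Rodd dx = (\<Sum>j=1..W. eps (2*j) * ((R (a - U j) dx - R (a + U j) dx) / 2))" for dx
  define Reven where "Reven dx = (\<Sum>j=1..W. eps (2*j+1) * ((R (a - U j) dx + R (a + U j) dx) / 2 - R a dx))"
    for dx
  have Da: "dderiv a g p = pdt g p / lam" if "smooth_fun g" for g
    unfolding a_def pdt_eq_dderiv dderiv_scaleR[OF that] by simp
  note scheme = p2_apply_eq_shifts[OF a_def U_def, of W s eps _ f p]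
  have adv: "(\<Sum>j=1..W. eps (2*j) *\<^sub>R U j) = (0, advection_vec W eps c)"
    unfolding U_def zero_advection_vec_eq_sum ..
  have odd: "(\<Sum>j=1..W. eps (2*j) * ((f (p + dx *\<^sub>R (a - U j)) - f (p + dx *\<^sub>R (a + U j))) / 2))
      = - dx * Aop1 W eps c f p - dx\<^sup>2 / lam * pdt (Aop1 W eps c f) p + Rodd dx" for dx
    unfolding sum_centred_difference_odd[OF sm] adv Aop1_eq_dderiv[OF sm, symmetric]
      Da[OF smooth_fun_Aop1[OF sm]] Rodd_def R_def
    by simp
  have even: "(\<Sum>j=1..W. eps (2*j+1)
      * ((f (p + dx *\<^sub>R (a - U j)) + f (p + dx *\<^sub>R (a + U j))) / 2 - f (p + dx *\<^sub>R a)))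
      = dx\<^sup>2 * Bop2 W (\<lambda>j. eps (2*j+1)) c f p + Reven dx" for dx
    unfolding sum_centred_difference_even[OF sm] Bop2_eq_dderiv[OF sm] U_def Reven_def R_def
    by simp
  have two_a: "2 *\<^sub>R a = (2 / lam) *\<^sub>R (1, 0)"
    by (simp add: a_def)
  note shift1 = taylor2_expansion_pdt[OF sm, of p _ "1 / lam", folded a_def R_def]
  note shift2 = taylor2_expansion_pdt[OF sm, of p _ "2 / lam", folded R_def two_a]
  have "R v \<in> O[at_right 0](\<lambda>dx. dx ^ 3)" for v
    unfolding R_def by (rule taylor2_rem_bigo[OF sm])
  then have "(\<lambda>dx. R (2 *\<^sub>R a) dx + (s - 2) * R a dx - s * Rodd dx + (s - 2) * Reven dx)
      \<in> O[at_right 0](\<lambda>dx. dx ^ 3)"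
    unfolding Rodd_def Reven_def
    by (intro sum_in_bigo big_sum_in_bigo bigo_const_mult bigo_divide_const)
  moreover have "p2_apply lam W s eps c dx f p
      - (s * dx * (pdt f p / lam + Aop1 W eps c f p)
         + dx\<^sup>2 * ((s + 2) / (2 * lam\<^sup>2) * pdt (pdt f) p + s / lam * pdt (Aop1 W eps c f) p
                   + (s - 2) * Bop2 W (\<lambda>j. eps (2*j+1)) c f p))
      = R (2 *\<^sub>R a) dx + (s - 2) * R a dx - s * Rodd dx + (s - 2) * Reven dx" for dx
    unfolding scheme odd even unfolding shift1 shift2
    using lam by (simp add: field_simps power2_eq_square)
  ultimately show ?thesis
    unfolding p_def by simp
qed

lemma init_scheme_expansion:
  fixes f :: "real \<times> (real^'d::finite) \<Rightarrow> real" and s :: real and eps w :: "nat \<Rightarrow> real"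
  assumes sm: "smooth_fun f" and lam: "lam \<noteq> 0"
    and c1: "c 1 = 0" and codd: "\<forall>j\<in>{1..W}. c (2*j+1) = - c (2*j)"
    and eps1: "eps 1 = 1" and w1: "w 1 = 1" and weven: "\<forall>j\<in>{1..W}. w (2*j) = eps (2*j)"
  defines "g j \<equiv> (2 - s) * eps (2*j+1) + (s - 1) * w (2*j+1)"
  shows "(\<lambda>dx. f (dx / lam, x) - E1_apply W s1 s eps c dx w (\<lambda>y. f (0, y)) x
      - (dx * (pdt f (0, x) / lam + Aop1 W eps c f (0, x))
         + dx\<^sup>2 * (pdt (pdt f) (0, x) / (2 * lam\<^sup>2) - Bop2 W g c f (0, x))))
    \<in> O[at_right 0](\<lambda>dx. dx ^ 3)"
proof -
  define p where "p = (0 :: real, x)"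
  define a :: "real \<times> (real^'d)" where "a = (1 / lam) *\<^sub>R (1, 0)"
  define U where "U = (\<lambda>j. (0 :: real, cr (c (2*j))))"
  define R where "R v dx = taylor2_rem f p v dx" for v dx
  define Rodd where "Rodd dx = (\<Sum>j=1..W. eps (2*j) * ((R (0 - U j) dx - R (0 + U j) dx) / 2))" for dx
  define Reven where "Reven dx = (\<Sum>j=1..W. g j * ((R (0 - U j) dx + R (0 + U j) dx) / 2 - R 0 dx))"
    for dx
  have init: "E1_apply W s1 s eps c dx w (\<lambda>y. f (0, y)) x
      = f p + (\<Sum>j=1..W. eps (2*j) * ((f (p + dx *\<^sub>R (0 - U j)) - f (p + dx *\<^sub>R (0 + U j))) / 2))
        + (\<Sum>j=1..W. g j * ((f (p + dx *\<^sub>R (0 - U j)) + f (p + dx *\<^sub>R (0 + U j))) / 2 - f (p + dx *\<^sub>R 0)))"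
    for dx
    unfolding E1_apply_local_init[OF c1 codd eps1 w1 weven] p_def U_def g_def
    by (simp add: sum.distrib)
  have odd: "(\<Sum>j=1..W. eps (2*j) * ((f (p + dx *\<^sub>R (0 - U j)) - f (p + dx *\<^sub>R (0 + U j))) / 2))
      = - dx * Aop1 W eps c f p + Rodd dx" for dx
    unfolding sum_centred_difference_odd[OF sm] U_def zero_advection_vec_eq_sum[symmetric]
      Aop1_eq_dderiv[OF sm, symmetric] dderiv_zero[OF smooth_fun_Aop1[OF sm]] Rodd_def R_def
    by simp
  have even: "(\<Sum>j=1..W. g j * ((f (p + dx *\<^sub>R (0 - U j)) + f (p + dx *\<^sub>R (0 + U j))) / 2 - f (p + dx *\<^sub>R 0)))
      = dx\<^sup>2 * Bop2 W g c f p + Reven dx" for dx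
    unfolding sum_centred_difference_even[OF sm] Bop2_eq_dderiv[OF sm] U_def Reven_def R_def
    by simp
  have time_step: "f (dx / lam, x) = f (p + dx *\<^sub>R a)" for dx
    by (simp add: p_def a_def)
  note shift = taylor2_expansion_pdt[OF sm, of p _ "1 / lam", folded a_def R_def]
  have "R v \<in> O[at_right 0](\<lambda>dx. dx ^ 3)" for v
    unfolding R_def by (rule taylor2_rem_bigo[OF sm])
  then have "(\<lambda>dx. R a dx - Rodd dx - Reven dx) \<in> O[at_right 0](\<lambda>dx. dx ^ 3)"
    unfolding Rodd_def Reven_def
    by (intro sum_in_bigo big_sum_in_bigo bigo_const_mult bigo_divide_const)
  moreover have "f (dx / lam, x) - E1_apply W s1 s eps c dx w (\<lambda>y. f (0, y)) x
      - (dx * (pdt f p / lam + Aop1 W eps c f p)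
         + dx\<^sup>2 * (pdt (pdt f) p / (2 * lam\<^sup>2) - Bop2 W g c f p))
      = R a dx - Rodd dx - Reven dx" for dx
    unfolding init odd even time_step unfolding shift
    using lam by (simp add: field_simps power2_eq_square)
  ultimately show ?thesis
    unfolding p_def by simp
qed

lemma bulk_modified_equation:
  fixes f :: "real \<times> (real^'d::finite) \<Rightarrow> real" and c :: "nat \<Rightarrow> int^'d"
    and W :: nat and eps :: "nat \<Rightarrow> real"
  assumes sm: "smooth_fun f" and s: "s \<noteq> 0" and lam: "lam \<noteq> 0"
  defines "Lf \<equiv> \<lambda>p. pdt f p + lam * Aop1 W eps c f p"
  shows "(\<lambda>dx. p2_apply lam W s eps c dx f (t, x) / (s * (dx / lam))
           - (pdt f (t, x) + lam * Aop1 W eps c f (t, x)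
              - lam * dx * (1/s - 1/2) *
                 (2 * Bop2 W (\<lambda>j. eps (2*j+1)) c f (t, x) - Aop1 W eps c (Aop1 W eps c f) (t, x))
              + dx * ((s + 2) / (2 * s * lam) * pdt Lf (t, x)
                      + (\<Sum>l\<in>UNIV. ((s - 2) / (2 * s) * advection_vec W eps c $ l) * pdx l Lf (t, x))
                      + 0 * Lf (t, x))))
        \<in> O[at_right 0](\<lambda>dx. dx\<^sup>2)"
proof -
  define R where "R dx = p2_apply lam W s eps c dx f (t, x)
      - (s * dx * (pdt f (t, x) / lam + Aop1 W eps c f (t, x))
         + dx\<^sup>2 * ((s + 2) / (2 * lam\<^sup>2) * pdt (pdt f) (t, x) + s / lam * pdt (Aop1 W eps c f) (t, x)
                   + (s - 2) * Bop2 W (\<lambda>j. eps (2*j+1)) c f (t, x)))" for dx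
  have "R \<in> O[at_right 0](\<lambda>dx. dx ^ 3)"
    unfolding R_def by (rule p2_apply_expansion[OF sm lam])
  then have "(\<lambda>dx. lam / s * (R dx / dx)) \<in> O[at_right 0](\<lambda>dx. dx\<^sup>2)"
    by (intro bigo_const_mult bigo_cube_divide)
  then show ?thesis
    by (rule landau_o.big.in_cong[THEN iffD1, rotated])
      (unfold Lf_def sum_pdx_advection_vec[OF smooth_fun_transport[OF sm]] pdt_transport[OF sm]
        Aop1_transport[OF sm] R_def,
       use s lam in \<open>auto simp: eventually_at_filter field_simps power2_eq_square\<close>)
qed

lemma init_modified_equation:
  fixes f :: "real \<times> (real^'d::finite) \<Rightarrow> real" and c :: "nat \<Rightarrow> int^'d"
    and W :: nat and s :: real and eps w :: "nat \<Rightarrow> real"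
  assumes sm: "smooth_fun f" and lam: "lam \<noteq> 0"
    and c1: "c 1 = 0" and codd: "\<forall>j\<in>{1..W}. c (2*j+1) = - c (2*j)"
    and eps1: "eps 1 = 1" and w1: "w 1 = 1" and weven: "\<forall>j\<in>{1..W}. w (2*j) = eps (2*j)"
  defines "Lf \<equiv> \<lambda>p. pdt f p + lam * Aop1 W eps c f p"
  shows "(\<lambda>dx. (f (dx / lam, x) - E1_apply W s1 s eps c dx w (\<lambda>y. f (0, y)) x) / (dx / lam)
           - (pdt f (0, x) + lam * Aop1 W eps c f (0, x)
              - lam * dx / 2 *
                 (2 * Bop2 W (\<lambda>j. (2 - s) * eps (2*j+1) + (s - 1) * w (2*j+1)) c f (0, x)
                  - Aop1 W eps c (Aop1 W eps c f) (0, x))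
              + dx * (1 / (2 * lam) * pdt Lf (0, x)
                      + (\<Sum>l\<in>UNIV. (- 1 / 2 * advection_vec W eps c $ l) * pdx l Lf (0, x))
                      + 0 * Lf (0, x))))
        \<in> O[at_right 0](\<lambda>dx. dx\<^sup>2)"
proof -
  define g where "g j = (2 - s) * eps (2*j+1) + (s - 1) * w (2*j+1)" for j
  define R where "R dx = f (dx / lam, x) - E1_apply W s1 s eps c dx w (\<lambda>y. f (0, y)) x
      - (dx * (pdt f (0, x) / lam + Aop1 W eps c f (0, x))
         + dx\<^sup>2 * (pdt (pdt f) (0, x) / (2 * lam\<^sup>2) - Bop2 W g c f (0, x)))" for dx
  have "R \<in> O[at_right 0](\<lambda>dx. dx ^ 3)"
    unfolding R_def g_def by (rule init_scheme_expansion[OF sm lam c1 codd eps1 w1 weven])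
  then have "(\<lambda>dx. lam * (R dx / dx)) \<in> O[at_right 0](\<lambda>dx. dx\<^sup>2)"
    by (intro bigo_const_mult bigo_cube_divide)
  then show ?thesis
    by (rule landau_o.big.in_cong[THEN iffD1, rotated])
      (unfold Lf_def sum_pdx_advection_vec[OF smooth_fun_transport[OF sm]] pdt_transport[OF sm]
        Aop1_transport[OF sm] R_def g_def,
       use lam in \<open>auto simp: eventually_at_filter field_simps power2_eq_square\<close>)
qed

theorem proposition11:
  fixes W :: nat and c :: "nat \<Rightarrow> int^'d::finite" and s s1 lam :: real
    and eps w :: "nat \<Rightarrow> real"
  assumes W: "W \<ge> 1"
    and c1: "c 1 = 0"
    and codd: "\<forall>j\<in>{1..W}. c (2*j+1) = - c (2*j)"
    and s: "0 < s" "s \<le> 2"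
    and eps1: "eps 1 = 1"
    and lam: "lam > 0"
    and w1: "w 1 = 1"
    and weven: "\<forall>j\<in>{1..W}. w (2*j) = eps (2*j)"
  shows
   "(\<exists>\<alpha> \<gamma> :: real. \<exists>\<beta> :: 'd \<Rightarrow> real. \<forall>f :: real \<times> (real^'d) \<Rightarrow> real. smooth_fun f \<longrightarrow>
      (let Lf = (\<lambda>p. pdt f p + lam * Aop1 W eps c f p) in
       \<forall>t x. t \<ge> 0 \<longrightarrow>
        (\<lambda>dx. p2_apply lam W s eps c dx f (t, x) / (s * (dx / lam))
           - (pdt f (t, x) + lam * Aop1 W eps c f (t, x)
              - lam * dx * (1/s - 1/2) *
                 (2 * Bop2 W (\<lambda>j. eps (2*j+1)) c f (t, x) - Aop1 W eps c (Aop1 W eps c f) (t, x))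
              + dx * (\<alpha> * pdt Lf (t, x) + (\<Sum>l\<in>UNIV. \<beta> l * pdx l Lf (t, x)) + \<gamma> * Lf (t, x))))
        \<in> O[at_right 0](\<lambda>dx. dx^2)))
  \<and> (\<exists>\<alpha> \<gamma> :: real. \<exists>\<beta> :: 'd \<Rightarrow> real. \<forall>f :: real \<times> (real^'d) \<Rightarrow> real. smooth_fun f \<longrightarrow>
      (let Lf = (\<lambda>p. pdt f p + lam * Aop1 W eps c f p) in
       \<forall>x.
        (\<lambda>dx. (f (dx / lam, x) - E1_apply W s1 s eps c dx w (\<lambda>y. f (0, y)) x) / (dx / lam)
           - (pdt f (0, x) + lam * Aop1 W eps c f (0, x)
              - lam * dx / 2 *
                 (2 * Bop2 W (\<lambda>j. (2 - s) * eps (2*j+1) + (s - 1) * w (2*j+1)) c f (0, x)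
                  - Aop1 W eps c (Aop1 W eps c f) (0, x))
              + dx * (\<alpha> * pdt Lf (0, x) + (\<Sum>l\<in>UNIV. \<beta> l * pdx l Lf (0, x)) + \<gamma> * Lf (0, x))))
        \<in> O[at_right 0](\<lambda>dx. dx^2)))"
proof -
  have s0: "s \<noteq> 0" and lam0: "lam \<noteq> 0"
    using s lam by simp_all
  show ?thesis
    unfolding Let_def
    by (intro conjI exI allI impI)
      (erule bulk_modified_equation[OF _ s0 lam0], erule init_modified_equation[OF _ lam0 c1 codd eps1 w1 weven])
qed

end
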